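(* Let $X$ be a complete nonsingular toric variety which is Fano and all of whose toric subvarieties are Fano. Let $\widehat D$ be an exceptional divisor, with primitive relation $\rho_1+\cdots+\rho_k=\widehat\rho$. Then there exists a morphism of nonsingular toric varieties $X\to X'$ such that $\sigma:=\langle\rho_1,\ldots,\rho_k\rangle$ is a cone of the fan $\Delta'$ of $X'$ and $X\to X'$ is the blowing up of $X'$ along the toric subvariety $X'(\sigma)$.
   Context: $X$ has fan $\Delta$ in $N_{\mathbb R}$; each toric divisor $D$ corresponds to a ray generator $\rho$. A primitive set is a set $\{D_1,\ldots,D_k\}$ of toric divisors with empty intersection whose proper subsets all have nonempty intersection; for such $X$ its primitive relation is either $\rho_1+\cdots+\rho_k=0$ or $\rho_1+\cdots+\rho_k=\widehat\rho$ for a ray generator $\widehat\rho$. The toric divisor $\widehat D$ of $\widehat\rho$ is then called exceptional. For a cone $\sigma$ of a fan $\Delta'$, $X'(\sigma)$ is the corresponding torus-orbit closure. *)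

theory Defs
  imports "HOL-Analysis.Analysis"
begin

text \<open>Toric varieties are encoded by their fans in N_R = real^'n with lattice N = integer
vectors. A nonsingular fan is simplicial, so each cone is recorded by the finite set of
its primitive ray generators.\<close>

definition lattice_vec :: "real^'n \<Rightarrow> bool" where
  "lattice_vec v \<longleftrightarrow> (\<forall>i. v$i \<in> \<int>)"

definition lattice_basis :: "(real^'n) set \<Rightarrow> bool" where
  "lattice_basis B \<longleftrightarrow> finite B \<and> card B = CARD('n) \<and> (\<forall>b\<in>B. lattice_vec b) \<and>
     (\<forall>v. lattice_vec v \<longrightarrow> (\<exists>c. (\<forall>b\<in>B. c b \<in> \<int>) \<and> v = (\<Sum>b\<in>B. c b *\<^sub>R b)))"

definition pos_hull :: "(real^'n) set \<Rightarrow> (real^'n) set" where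
  "pos_hull S = {\<Sum>s\<in>S. c s *\<^sub>R s | c. \<forall>s\<in>S. 0 \<le> c s}"

definition nonsingular_fan :: "(real^'n) set set \<Rightarrow> bool" where
  "nonsingular_fan \<Delta> \<longleftrightarrow> finite \<Delta> \<and> {} \<in> \<Delta> \<and>
     (\<forall>S\<in>\<Delta>. \<forall>T. T \<subseteq> S \<longrightarrow> T \<in> \<Delta>) \<and>
     (\<forall>S\<in>\<Delta>. \<exists>B. lattice_basis B \<and> S \<subseteq> B) \<and>
     (\<forall>S\<in>\<Delta>. \<forall>T\<in>\<Delta>. pos_hull S \<inter> pos_hull T = pos_hull (S \<inter> T))"

definition complete_fan :: "(real^'n) set set \<Rightarrow> bool" where
  "complete_fan \<Delta> \<longleftrightarrow> \<Union>(pos_hull ` \<Delta>) = UNIV"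

definition rays :: "(real^'n) set set \<Rightarrow> (real^'n) set" where
  "rays \<Delta> = {r. {r} \<in> \<Delta>}"

definition maximal_cone :: "(real^'n) set set \<Rightarrow> (real^'n) set \<Rightarrow> bool" where
  "maximal_cone \<Delta> \<sigma> \<longleftrightarrow> \<sigma> \<in> \<Delta> \<and> (\<forall>\<tau>\<in>\<Delta>. \<sigma> \<subseteq> \<tau> \<longrightarrow> \<tau> = \<sigma>)"

text \<open>The orbit closure X(tau) has fan Star(tau) projected to N_R / span tau; its rays are the
images of rays r with tau \<union> {r} a cone, r \<notin> tau, and linear functions on the quotient are
functionals u vanishing on tau. X(tau) is Fano iff the anticanonical support function of
this quotient fan is strictly convex: for every maximal cone sigma \<supseteq> tau there is u with
u = 0 on tau, u = 1 on the rays of sigma - tau, and u < 1 on all other rays of the star.\<close>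
definition fano_orbit_closure :: "(real^'n) set set \<Rightarrow> (real^'n) set \<Rightarrow> bool" where
  "fano_orbit_closure \<Delta> \<tau> \<longleftrightarrow>
     (\<forall>\<sigma>. maximal_cone \<Delta> \<sigma> \<and> \<tau> \<subseteq> \<sigma> \<longrightarrow>
        (\<exists>u::real^'n. (\<forall>r\<in>\<tau>. inner u r = 0) \<and> (\<forall>r\<in>\<sigma> - \<tau>. inner u r = 1) \<and>
           (\<forall>r. r \<in> rays \<Delta> \<and> r \<notin> \<sigma> \<and> insert r \<tau> \<in> \<Delta> \<longrightarrow> inner u r < 1)))"

definition fano :: "(real^'n) set set \<Rightarrow> bool" where
  "fano \<Delta> \<longleftrightarrow> fano_orbit_closure \<Delta> {}"

definition all_toric_subvarieties_fano :: "(real^'n) set set \<Rightarrow> bool" where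
  "all_toric_subvarieties_fano \<Delta> \<longleftrightarrow> (\<forall>\<tau>\<in>\<Delta>. fano_orbit_closure \<Delta> \<tau>)"

text \<open>Primitive set: divisors D_r (r \<in> P) with empty intersection (P not a cone) whose proper
subsets all have nonempty intersection (are cones).\<close>
definition primitive_collection :: "(real^'n) set set \<Rightarrow> (real^'n) set \<Rightarrow> bool" where
  "primitive_collection \<Delta> P \<longleftrightarrow> P \<subseteq> rays \<Delta> \<and> P \<notin> \<Delta> \<and> (\<forall>Q. Q \<subset> P \<longrightarrow> Q \<in> \<Delta>)"

text \<open>Star subdivision of Delta' at the cone sigma (fan of the blow-up of X' along X'(sigma)),
with new ray the sum of the generators of sigma.\<close>
definition star_subdivision :: "(real^'n) set set \<Rightarrow> (real^'n) set \<Rightarrow> (real^'n) set set" where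
  "star_subdivision \<Delta>' \<sigma> =
     {\<tau>\<in>\<Delta>'. \<not> \<sigma> \<subseteq> \<tau>} \<union>
     {insert (\<Sum>\<sigma>) \<tau> | \<tau>. \<tau> \<in> \<Delta>' \<and> \<not> \<sigma> \<subseteq> \<tau> \<and> \<tau> \<union> \<sigma> \<in> \<Delta>'}"

end

theory Submission
  imports Defs
begin

text \<open>Let M be a maximal cone containing \<rho> = \<Sum>P. The Fano property of the orbit closure
  X(P \<inter> M) yields a linear function that vanishes on P \<inter> M, is 1 at \<rho> and is an integer
  < 1 at every generator of P spanning a cone with P \<inter> M; expanding \<rho> = \<Sum>P then shows that
  exactly one generator of P lies outside M. Flipping M across its facets, it follows that
  (S \<union> P) - {p} is a cone for every cone S \<ni> \<rho> and every p \<in> P. So deleting \<rho> and merging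
  the cones S \<ni> \<rho> into (S - {\<rho>}) \<union> P gives a fan \<Delta>'; it is nonsingular because trading \<rho>
  for p in a lattice basis is unimodular, and \<Delta> is its star subdivision at P.\<close>

section \<open>Nonnegative and linear combinations\<close>

lemma sum_mem_convex_cone:
  assumes "convex_cone K" "\<And>a. a \<in> A \<Longrightarrow> f a \<in> K"
  shows "sum f A \<in> K"
  using assms by (induction A rule: infinite_finite_induct)
    (auto simp: convex_cone_contains_0 convex_cone_add)

lemma convex_cone_pos_hull: "convex_cone (pos_hull S)"
  unfolding convex_cone_iff
proof (intro conjI ballI allI impI)
  show "0 \<in> pos_hull S"
    unfolding pos_hull_def by (rule CollectI, rule exI[of _ "\<lambda>_. 0"]) auto
next
  fix x y assume "x \<in> pos_hull S" "y \<in> pos_hull S"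
  then obtain c d where "x = (\<Sum>s\<in>S. c s *\<^sub>R s)" "\<forall>s\<in>S. 0 \<le> c s"
    and "y = (\<Sum>s\<in>S. d s *\<^sub>R s)" "\<forall>s\<in>S. 0 \<le> d s"
    unfolding pos_hull_def by auto
  then show "x + y \<in> pos_hull S"
    unfolding pos_hull_def
    by (intro CollectI exI[of _ "\<lambda>s. c s + d s"]) (auto simp: scaleR_add_left sum.distrib)
next
  fix x and a :: real assume "x \<in> pos_hull S" "0 \<le> a"
  then obtain c where "x = (\<Sum>s\<in>S. c s *\<^sub>R s)" "\<forall>s\<in>S. 0 \<le> c s"
    unfolding pos_hull_def by auto
  with \<open>0 \<le> a\<close> show "a *\<^sub>R x \<in> pos_hull S"
    unfolding pos_hull_def
    by (intro CollectI exI[of _ "\<lambda>s. a * c s"]) (auto simp: scaleR_sum_right)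
qed

lemma pos_hull_eq_convex_cone_hull:
  assumes "finite S"
  shows "pos_hull S = convex_cone hull S"
proof
  show "pos_hull S \<subseteq> convex_cone hull S"
  proof
    fix x assume "x \<in> pos_hull S"
    then obtain c where "x = (\<Sum>s\<in>S. c s *\<^sub>R s)" "\<forall>s\<in>S. 0 \<le> c s"
      unfolding pos_hull_def by auto
    then show "x \<in> convex_cone hull S"
      by (auto intro: sum_mem_convex_cone convex_cone_convex_cone_hull convex_cone_hull_mul hull_inc)
  qed
  have "s \<in> pos_hull S" if "s \<in> S" for s
  proof -
    have "s = (\<Sum>t\<in>S. (if t = s then 1 else 0) *\<^sub>R t)"
      using assms that by (simp add: if_distrib[of "\<lambda>k. k *\<^sub>R _"] cong: if_cong)
    then show ?thesis
      unfolding pos_hull_def by (intro CollectI exI[of _ "\<lambda>t. if t = s then 1 else 0"]) auto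
  qed
  then show "convex_cone hull S \<subseteq> pos_hull S"
    by (intro hull_minimal convex_cone_pos_hull) auto
qed

lemma closed_pos_hull: "finite S \<Longrightarrow> closed (pos_hull S)"
  by (simp add: pos_hull_eq_convex_cone_hull closed_convex_cone_hull)

lemma pos_hull_mono: "finite S \<Longrightarrow> A \<subseteq> S \<Longrightarrow> pos_hull A \<subseteq> pos_hull S"
  by (simp add: pos_hull_eq_convex_cone_hull finite_subset hull_mono)

lemma sum_mem_pos_hull:
  assumes "finite S" "A \<subseteq> S"
  shows "\<Sum>A \<in> pos_hull S"
  unfolding pos_hull_eq_convex_cone_hull[OF assms(1)] using assms(2)
  by (intro sum_mem_convex_cone convex_cone_convex_cone_hull) (auto intro: hull_inc)

lemma pos_hull_insert_redundant:
  "finite S \<Longrightarrow> r \<in> pos_hull S \<Longrightarrow> pos_hull (insert r S) = pos_hull S"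
  by (simp add: pos_hull_eq_convex_cone_hull hull_redundant)

lemma sum_scaleR_extend:
  fixes c :: "'a::real_vector \<Rightarrow> real"
  assumes "finite B" "A \<subseteq> B"
  shows "(\<Sum>a\<in>A. c a *\<^sub>R a) = (\<Sum>a\<in>B. (if a \<in> A then c a else 0) *\<^sub>R a)"
  using assms
  by (simp add: if_distrib[of "\<lambda>k. k *\<^sub>R _"] sum.inter_restrict[symmetric] Int_absorb1 cong: if_cong)

lemma independent_coeffs_unique:
  fixes B :: "'a::euclidean_space set"
  assumes "independent B" "A1 \<subseteq> B" "A2 \<subseteq> B"
    and "(\<Sum>a\<in>A1. c a *\<^sub>R a) = (\<Sum>a\<in>A2. d a *\<^sub>R a)" "x \<in> B"
  shows "(if x \<in> A1 then c x else 0) = (if x \<in> A2 then d x else 0)"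
proof -
  let ?e = "\<lambda>a. (if a \<in> A1 then c a else 0) - (if a \<in> A2 then d a else 0)"
  have "finite B"
    using assms(1) by (simp add: independent_explicit)
  then have "(\<Sum>a\<in>B. ?e a *\<^sub>R a) = (\<Sum>a\<in>A1. c a *\<^sub>R a) - (\<Sum>a\<in>A2. d a *\<^sub>R a)"
    using sum_scaleR_extend[of B A1 c] sum_scaleR_extend[of B A2 d] assms(2,3)
    by (simp add: scaleR_diff_left sum_subtractf)
  then have "(\<Sum>a\<in>B. ?e a *\<^sub>R a) = 0"
    using assms(4) by simp
  with assms(1,5) have "?e x = 0"
    unfolding independent_explicit by (elim conjE allE[of _ ?e]) blast
  then show ?thesis by simp
qed

lemma independent_pos_hull_coeff:
  fixes B :: "(real^'n) set"
  assumes B: "independent B" "A \<subseteq> B" "A' \<subseteq> B"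
    and x: "(\<Sum>a\<in>A'. c a *\<^sub>R a) \<in> pos_hull A" and b: "b \<in> A'"
  shows "0 \<le> c b" and "b \<notin> A \<Longrightarrow> c b = 0"
proof -
  obtain d where d: "(\<Sum>a\<in>A'. c a *\<^sub>R a) = (\<Sum>a\<in>A. d a *\<^sub>R a)" "\<forall>a\<in>A. 0 \<le> d a"
    using x unfolding pos_hull_def by auto
  have "c b = (if b \<in> A then d b else 0)"
    using independent_coeffs_unique[OF B(1,3,2) d(1) subsetD[OF B(3) b]] b by simp
  with d(2) show "0 \<le> c b" and "b \<notin> A \<Longrightarrow> c b = 0"
    by auto
qed

text \<open>Subtract the least coefficient on P and trade it for a multiple of \<Sum>P.\<close>
lemma pos_hull_stellar_cover:
  fixes S P :: "(real^'n) set"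
  assumes S: "finite S" "P \<subseteq> S" "\<Sum>P \<notin> S" and P: "P \<noteq> {}" and x: "x \<in> pos_hull S"
  shows "\<exists>p\<in>P. x \<in> pos_hull (insert (\<Sum>P) (S - {p}))"
proof -
  obtain c where c: "x = (\<Sum>s\<in>S. c s *\<^sub>R s)" "\<forall>s\<in>S. 0 \<le> c s"
    using x unfolding pos_hull_def by auto
  have fP: "finite P"
    using S(1,2) by (rule finite_subset[rotated])
  have "Min (c ` P) \<in> c ` P"
    using fP P by simp
  then obtain p where p: "p \<in> P" "c p = Min (c ` P)"
    by auto
  have p_min: "\<forall>q\<in>P. c p \<le> c q"
    using p(2) fP by simp
  have cp: "0 \<le> c p"
    using p(1) c(2) S(2) by auto
  define c' where "c' s = c s - (if s \<in> P then c p else 0)" for s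
  have c': "\<forall>s\<in>S. 0 \<le> c' s" "c' p = 0"
    using p(1) p_min c(2) unfolding c'_def by auto
  have "x = (\<Sum>s\<in>S. c' s *\<^sub>R s) + (\<Sum>s\<in>S. (if s \<in> P then c p else 0) *\<^sub>R s)"
    unfolding c(1) c'_def sum.distrib[symmetric] by (rule sum.cong) (auto simp: scaleR_diff_left)
  also have "(\<Sum>s\<in>S. (if s \<in> P then c p else 0) *\<^sub>R s) = c p *\<^sub>R \<Sum>P"
    using sum_scaleR_extend[OF S(1,2), of "\<lambda>_. c p"] by (simp add: scaleR_sum_right)
  also have "(\<Sum>s\<in>S. c' s *\<^sub>R s) = (\<Sum>s\<in>S - {p}. c' s *\<^sub>R s)"
    using sum.remove[OF S(1), of p "\<lambda>s. c' s *\<^sub>R s"] p(1) S(2) c'(2) by auto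
  finally have x_eq: "x = (\<Sum>s\<in>S - {p}. c' s *\<^sub>R s) + c p *\<^sub>R \<Sum>P" .
  define d where "d s = (if s = \<Sum>P then c p else c' s)" for s
  have "(\<Sum>s\<in>insert (\<Sum>P) (S - {p}). d s *\<^sub>R s) = c p *\<^sub>R \<Sum>P + (\<Sum>s\<in>S - {p}. d s *\<^sub>R s)"
    using S(1,3) by (simp add: d_def)
  also have "(\<Sum>s\<in>S - {p}. d s *\<^sub>R s) = (\<Sum>s\<in>S - {p}. c' s *\<^sub>R s)"
    using S(3) by (intro sum.cong) (auto simp: d_def)
  finally have "x = (\<Sum>s\<in>insert (\<Sum>P) (S - {p}). d s *\<^sub>R s)"
    using x_eq by (simp add: add.commute)
  moreover have "\<forall>s\<in>insert (\<Sum>P) (S - {p}). 0 \<le> d s"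
    using c'(1) cp by (auto simp: d_def)
  ultimately show ?thesis
    using p(1) unfolding pos_hull_def by blast
qed

section \<open>Lattice bases\<close>

lemma Ints_less_one_imp_nonpos: "(x::real) \<in> \<int> \<Longrightarrow> x < 1 \<Longrightarrow> x \<le> 0"
  by (elim Ints_cases) simp

lemma lattice_basis_independent:
  fixes B :: "(real^'n) set"
  assumes "lattice_basis B"
  shows "independent B"
proof -
  have "b \<in> span B" if "b \<in> Basis" for b
  proof -
    obtain i where b: "b = axis i 1"
      using \<open>b \<in> Basis\<close> by (auto simp: Basis_vec_def)
    have "lattice_vec b"
      unfolding lattice_vec_def b axis_def by auto
    then obtain c where "b = (\<Sum>x\<in>B. c x *\<^sub>R x)"
      using assms unfolding lattice_basis_def by blast
    then show "b \<in> span B"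
      by (simp add: span_sum span_mul span_base)
  qed
  then have "span B = UNIV"
    by (metis span_Basis span_minimal subsetI subspace_span top.extremum_uniqueI)
  with assms show ?thesis
    using card_eq_dim[of B UNIV] unfolding lattice_basis_def by simp
qed

lemma lattice_basis_inner_Ints:
  assumes "lattice_basis B" "lattice_vec v" "\<And>b. b \<in> B \<Longrightarrow> inner u b \<in> \<int>"
  shows "inner u v \<in> \<int>"
proof -
  obtain c where c: "\<forall>b\<in>B. c b \<in> \<int>" "v = (\<Sum>b\<in>B. c b *\<^sub>R b)"
    using assms(1,2) unfolding lattice_basis_def by blast
  have "inner u v = (\<Sum>b\<in>B. c b * inner u b)"
    unfolding c(2) by (simp add: inner_sum_right)
  also have "\<dots> \<in> \<int>"
    using c(1) assms(3) by (intro Ints_sum Ints_mult) auto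
  finally show ?thesis .
qed

lemma lattice_basis_exchange:
  fixes M :: "(real^'n) set"
  assumes M: "lattice_basis M" and r: "r \<in> M" and p: "p \<notin> M" "lattice_vec p"
    and k: "\<And>b. b \<in> M - {r} \<Longrightarrow> k b \<in> \<int>" and r_eq: "r = p + (\<Sum>b\<in>M - {r}. k b *\<^sub>R b)"
  shows "lattice_basis (insert p (M - {r}))"
  unfolding lattice_basis_def
proof (intro conjI ballI allI impI)
  have fin: "finite M" "card M = CARD('n)"
    using M unfolding lattice_basis_def by auto
  then show "finite (insert p (M - {r}))" by simp
  show "card (insert p (M - {r})) = CARD('n)"
    using fin r p by (simp add: card_insert_if)
  show "lattice_vec b" if "b \<in> insert p (M - {r})" for b
    using that p M unfolding lattice_basis_def by auto
  fix v :: "real^'n" assume "lattice_vec v"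
  then obtain c where c: "\<forall>b\<in>M. c b \<in> \<int>" "v = (\<Sum>b\<in>M. c b *\<^sub>R b)"
    using M unfolding lattice_basis_def by blast
  define e where "e b = (if b = p then c r else c b + c r * k b)" for b
  have "v = c r *\<^sub>R r + (\<Sum>b\<in>M - {r}. c b *\<^sub>R b)"
    unfolding c(2) using fin r by (simp add: sum.remove)
  also have "c r *\<^sub>R r = c r *\<^sub>R p + (\<Sum>b\<in>M - {r}. (c r * k b) *\<^sub>R b)"
    by (subst r_eq) (simp add: scaleR_add_right scaleR_sum_right)
  also have "c r *\<^sub>R p + (\<Sum>b\<in>M - {r}. (c r * k b) *\<^sub>R b) + (\<Sum>b\<in>M - {r}. c b *\<^sub>R b)
      = c r *\<^sub>R p + (\<Sum>b\<in>M - {r}. e b *\<^sub>R b)"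
    using p(1) unfolding add.assoc sum.distrib[symmetric]
    by (intro arg_cong2[where f = "(+)"] refl sum.cong) (auto simp: e_def scaleR_add_left)
  also have "\<dots> = (\<Sum>b\<in>insert p (M - {r}). e b *\<^sub>R b)"
    using fin p(1) by (simp add: e_def)
  finally have "v = (\<Sum>b\<in>insert p (M - {r}). e b *\<^sub>R b)" .
  moreover have "\<forall>b\<in>insert p (M - {r}). e b \<in> \<int>"
    using c(1) k r unfolding e_def by auto
  ultimately show "\<exists>e. (\<forall>b\<in>insert p (M - {r}). e b \<in> \<int>) \<and> v = (\<Sum>b\<in>insert p (M - {r}). e b *\<^sub>R b)"
    by blast
qed

section \<open>Complete nonsingular fans\<close>

lemma nonsingular_fan_finite: "nonsingular_fan \<Delta> \<Longrightarrow> finite \<Delta>"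
  and nonsingular_fan_empty: "nonsingular_fan \<Delta> \<Longrightarrow> {} \<in> \<Delta>"
  and nonsingular_fan_face: "nonsingular_fan \<Delta> \<Longrightarrow> S \<in> \<Delta> \<Longrightarrow> T \<subseteq> S \<Longrightarrow> T \<in> \<Delta>"
  and nonsingular_fan_basis: "nonsingular_fan \<Delta> \<Longrightarrow> S \<in> \<Delta> \<Longrightarrow> \<exists>B. lattice_basis B \<and> S \<subseteq> B"
  and nonsingular_fan_inter:
    "nonsingular_fan \<Delta> \<Longrightarrow> S \<in> \<Delta> \<Longrightarrow> T \<in> \<Delta> \<Longrightarrow> pos_hull S \<inter> pos_hull T = pos_hull (S \<inter> T)"
  by (simp_all add: nonsingular_fan_def)

lemma nonsingular_fan_cone_finite:
  assumes "nonsingular_fan \<Delta>" "S \<in> \<Delta>"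
  shows "finite S"
  using nonsingular_fan_basis[OF assms] unfolding lattice_basis_def by (auto intro: finite_subset)

lemma nonsingular_fan_cone_independent:
  assumes "nonsingular_fan \<Delta>" "S \<in> \<Delta>"
  shows "independent S"
  using nonsingular_fan_basis[OF assms] lattice_basis_independent independent_mono by blast

lemma lattice_vec_ray:
  assumes "nonsingular_fan \<Delta>" "r \<in> rays \<Delta>"
  shows "lattice_vec r"
  using nonsingular_fan_basis[OF assms(1), of "{r}"] assms(2) unfolding rays_def lattice_basis_def by auto

lemma maximal_cone_in: "maximal_cone \<Delta> M \<Longrightarrow> M \<in> \<Delta>"
  unfolding maximal_cone_def by blast

lemma maximal_cone_exists:
  assumes "nonsingular_fan \<Delta>" "S \<in> \<Delta>"
  shows "\<exists>M. maximal_cone \<Delta> M \<and> S \<subseteq> M"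
  using finite_has_maximal2[OF nonsingular_fan_finite[OF assms(1)] assms(2)]
  unfolding maximal_cone_def by blast

lemma nonsingular_fan_subset_if_sum_mem_pos_hull:
  assumes fan: "nonsingular_fan \<Delta>" and C: "C \<in> \<Delta>" and T: "T \<in> \<Delta>"
    and sum: "\<Sum>C \<in> pos_hull T"
  shows "C \<subseteq> T"
proof
  fix x assume x: "x \<in> C"
  have "\<Sum>C \<in> pos_hull C"
    using nonsingular_fan_cone_finite[OF fan C] by (simp add: sum_mem_pos_hull)
  with sum have "\<Sum>C \<in> pos_hull (C \<inter> T)"
    using nonsingular_fan_inter[OF fan C T] by auto
  then obtain d where "(\<Sum>s\<in>C. 1 *\<^sub>R s) = (\<Sum>s\<in>C \<inter> T. d s *\<^sub>R s)"
    unfolding pos_hull_def by auto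
  from independent_coeffs_unique[OF nonsingular_fan_cone_independent[OF fan C] subset_refl _ this x]
  show "x \<in> T"
    using x by (auto split: if_splits)
qed

text \<open>The cones not containing C form a closed set that misses the point \<Sum>C, so the points
  \<Sum>C + \<epsilon> v with small \<epsilon> > 0 lie in cones containing C.\<close>
lemma complete_fan_exists_cone_beyond:
  fixes \<Delta> :: "(real^'n) set set"
  assumes fan: "nonsingular_fan \<Delta>" and comp: "complete_fan \<Delta>" and C: "C \<in> \<Delta>" and M: "M \<in> \<Delta>"
    and leaves: "\<And>\<epsilon>. \<epsilon> > 0 \<Longrightarrow> \<Sum>C + \<epsilon> *\<^sub>R v \<notin> pos_hull M"
  shows "\<exists>T\<in>\<Delta>. C \<subseteq> T \<and> \<not> T \<subseteq> M"
proof (rule ccontr)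
  assume inside: "\<not> (\<exists>T\<in>\<Delta>. C \<subseteq> T \<and> \<not> T \<subseteq> M)"
  define U where "U = \<Union> (pos_hull ` {T\<in>\<Delta>. \<not> T \<subseteq> M})"
  have "closed U"
    unfolding U_def using nonsingular_fan_finite[OF fan]
    by (intro closed_Union) (auto intro: closed_pos_hull nonsingular_fan_cone_finite[OF fan])
  moreover have "\<Sum>C \<notin> U"
    unfolding U_def using inside nonsingular_fan_subset_if_sum_mem_pos_hull[OF fan C] by blast
  moreover have "((\<lambda>\<epsilon>. \<Sum>C + \<epsilon> *\<^sub>R v) \<longlongrightarrow> \<Sum>C + 0 *\<^sub>R v) (at_right 0)"
    by (intro tendsto_intros)
  ultimately have "\<forall>\<^sub>F \<epsilon> in at_right 0. \<Sum>C + \<epsilon> *\<^sub>R v \<in> - U"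
    by (intro topological_tendstoD) (auto simp: open_Compl)
  then have "\<forall>\<^sub>F \<epsilon> in at_right 0. \<epsilon> > 0 \<and> \<Sum>C + \<epsilon> *\<^sub>R v \<notin> U"
    by (intro eventually_conj eventually_at_right_less) auto
  then obtain \<epsilon> :: real where \<epsilon>: "\<epsilon> > 0" "\<Sum>C + \<epsilon> *\<^sub>R v \<notin> U"
    using eventually_happens'[OF trivial_limit_at_right_real] by blast
  obtain T where T: "T \<in> \<Delta>" "\<Sum>C + \<epsilon> *\<^sub>R v \<in> pos_hull T"
    using comp unfolding complete_fan_def by blast
  show False
  proof (cases "T \<subseteq> M")
    case True
    then show False
      using pos_hull_mono[OF nonsingular_fan_cone_finite[OF fan M] True] T leaves[OF \<epsilon>(1)] by auto
  next
    case False
    then show False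
      using \<epsilon>(2) T unfolding U_def by auto
  qed
qed

lemma maximal_cone_lattice_basis:
  fixes \<Delta> :: "(real^'n) set set"
  assumes fan: "nonsingular_fan \<Delta>" and comp: "complete_fan \<Delta>" and M: "maximal_cone \<Delta> M"
  shows "lattice_basis M"
proof -
  have MD: "M \<in> \<Delta>"
    using M by (rule maximal_cone_in)
  obtain B where B: "lattice_basis B" "M \<subseteq> B"
    using nonsingular_fan_basis[OF fan MD] by blast
  have "b \<in> M" if b: "b \<in> B" for b
  proof (rule ccontr)
    assume "b \<notin> M"
    have fM: "finite M"
      using nonsingular_fan_cone_finite[OF fan MD] .
    have "\<exists>T\<in>\<Delta>. M \<subseteq> T \<and> \<not> T \<subseteq> M"
    proof (rule complete_fan_exists_cone_beyond[OF fan comp MD MD])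
      fix \<epsilon> :: real assume "\<epsilon> > 0"
      let ?c = "\<lambda>a. if a = b then \<epsilon> else 1"
      have "(\<Sum>a\<in>M. ?c a *\<^sub>R a) = \<Sum>M"
        using \<open>b \<notin> M\<close> by (intro sum.cong) auto
      then have "(\<Sum>a\<in>insert b M. ?c a *\<^sub>R a) = \<Sum>M + \<epsilon> *\<^sub>R b"
        using fM \<open>b \<notin> M\<close> by (simp add: add.commute)
      then show "\<Sum>M + \<epsilon> *\<^sub>R b \<notin> pos_hull M"
        using independent_pos_hull_coeff(2)[OF lattice_basis_independent[OF B(1)] B(2), of "insert b M" ?c b]
          \<open>b \<notin> M\<close> \<open>\<epsilon> > 0\<close> b B(2) by auto
    qed
    then show False
      using M unfolding maximal_cone_def by blast
  qed
  with B show ?thesis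
    by (metis subsetI subset_antisym)
qed

lemma maximal_cone_flip:
  fixes \<Delta> :: "(real^'n) set set"
  assumes fan: "nonsingular_fan \<Delta>" and comp: "complete_fan \<Delta>" and M: "maximal_cone \<Delta> M"
    and m: "m \<in> M"
  shows "\<exists>M'. maximal_cone \<Delta> M' \<and> M - {m} \<subseteq> M' \<and> m \<notin> M'"
proof -
  have MD: "M \<in> \<Delta>"
    using M by (rule maximal_cone_in)
  have "\<exists>T\<in>\<Delta>. M - {m} \<subseteq> T \<and> \<not> T \<subseteq> M"
  proof (rule complete_fan_exists_cone_beyond[OF fan comp nonsingular_fan_face[OF fan MD] MD])
    fix \<epsilon> :: real assume "\<epsilon> > 0"
    let ?c = "\<lambda>a. if a = m then - \<epsilon> else 1"
    have "(\<Sum>a\<in>M - {m}. ?c a *\<^sub>R a) = \<Sum>(M - {m})"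
      by (intro sum.cong) auto
    then have "(\<Sum>a\<in>M. ?c a *\<^sub>R a) = \<Sum>(M - {m}) + \<epsilon> *\<^sub>R - m"
      using nonsingular_fan_cone_finite[OF fan MD] m by (simp add: sum.remove add.commute)
    then show "\<Sum>(M - {m}) + \<epsilon> *\<^sub>R - m \<notin> pos_hull M"
      using independent_pos_hull_coeff(1)[OF nonsingular_fan_cone_independent[OF fan MD] subset_refl
          subset_refl, of ?c m] m \<open>\<epsilon> > 0\<close> by auto
  qed auto
  then obtain T where T: "T \<in> \<Delta>" "M - {m} \<subseteq> T" "\<not> T \<subseteq> M"
    by blast
  obtain M' where M': "maximal_cone \<Delta> M'" "T \<subseteq> M'"
    using maximal_cone_exists[OF fan T(1)] by blast
  have "m \<notin> M'"
  proof
    assume "m \<in> M'"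
    then have "M \<subseteq> M'"
      using T(2) M'(2) by blast
    then have "M' = M"
      using M M'(1) unfolding maximal_cone_def by blast
    then show False
      using T(3) M'(2) by blast
  qed
  with M' T(2) show ?thesis
    by blast
qed

section \<open>Contracting an exceptional divisor\<close>

locale exceptional_primitive_relation =
  fixes \<Delta> :: "(real^'n) set set" and P :: "(real^'n) set" and \<rho> :: "real^'n"
  assumes fan: "nonsingular_fan \<Delta>" and complete: "complete_fan \<Delta>"
    and subvarieties_fano: "all_toric_subvarieties_fano \<Delta>"
    and primitive: "primitive_collection \<Delta> P"
    and ray: "\<rho> \<in> rays \<Delta>" and relation: "\<Sum>P = \<rho>"
begin

lemma primitive_subset_rays: "P \<subseteq> rays \<Delta>"
  and primitive_not_cone: "P \<notin> \<Delta>"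
  and primitive_psubset_cone: "Q \<subset> P \<Longrightarrow> Q \<in> \<Delta>"
  using primitive unfolding primitive_collection_def by auto

lemma primitive_not_subset_cone: "S \<in> \<Delta> \<Longrightarrow> \<not> P \<subseteq> S"
  using nonsingular_fan_face[OF fan] primitive_not_cone by blast

lemma primitive_nonempty: "P \<noteq> {}"
  using primitive_not_cone nonsingular_fan_empty[OF fan] by auto

lemma finite_primitive: "finite P"
proof -
  obtain p where p: "p \<in> P"
    using primitive_nonempty by auto
  then have "P - {p} \<in> \<Delta>"
    by (intro primitive_psubset_cone) auto
  then have "finite (P - {p})"
    by (rule nonsingular_fan_cone_finite[OF fan])
  then show ?thesis
    by simp
qed

lemma ray_not_in_primitive: "\<rho> \<notin> P"
proof
  assume "\<rho> \<in> P"
  have "P \<noteq> {\<rho>}"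
    using primitive_not_cone ray unfolding rays_def by auto
  with \<open>\<rho> \<in> P\<close> obtain q where q: "q \<in> P - {\<rho>}"
    by blast
  have "independent (P - {\<rho>})"
    using \<open>\<rho> \<in> P\<close> by (intro nonsingular_fan_cone_independent[OF fan] primitive_psubset_cone) auto
  moreover have "(\<Sum>v\<in>P - {\<rho>}. 1 *\<^sub>R v) = 0"
    using relation finite_primitive \<open>\<rho> \<in> P\<close> by (simp add: sum.remove)
  ultimately show False
    using q unfolding independent_explicit by (elim conjE allE[of _ "\<lambda>_. 1"]) auto
qed

text \<open>If two generators of P lie outside M, each of them spans a cone together with P \<inter> M,
  so the linear function u given by the Fano property of X(P \<inter> M) is an integer < 1, hence
  \<le> 0, on them. Summing over P contradicts u \<rho> = 1.\<close>
lemma maximal_cone_misses_one_generator: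
  assumes M: "maximal_cone \<Delta> M" and \<rho>: "\<rho> \<in> M"
  shows "\<exists>q. P - M = {q}"
proof -
  have MD: "M \<in> \<Delta>"
    using M by (rule maximal_cone_in)
  have "b1 = b2" if b: "b1 \<in> P - M" "b2 \<in> P - M" for b1 b2
  proof (rule ccontr)
    assume "b1 \<noteq> b2"
    have "P \<inter> M \<in> \<Delta>"
      using nonsingular_fan_face[OF fan MD] by blast
    then have "fano_orbit_closure \<Delta> (P \<inter> M)"
      using subvarieties_fano unfolding all_toric_subvarieties_fano_def by blast
    then obtain u where u0: "\<forall>r\<in>P \<inter> M. inner u r = 0" and u1: "\<forall>r\<in>M - P. inner u r = 1"
      and u_less: "\<forall>r. r \<in> rays \<Delta> \<and> r \<notin> M \<and> insert r (P \<inter> M) \<in> \<Delta> \<longrightarrow> inner u r < 1"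
      unfolding fano_orbit_closure_def using M by (auto simp: Diff_Int)
    have u_Ints: "inner u m \<in> \<int>" if "m \<in> M" for m
      using u0 u1 that by (cases "m \<in> P") auto
    have "inner u b \<le> 0" if "b \<in> P - M" for b
    proof -
      obtain b' where "b' \<in> P - M" "b' \<noteq> b"
        using b \<open>b1 \<noteq> b2\<close> by blast
      then have "insert b (P \<inter> M) \<subset> P"
        using that by blast
      then have "insert b (P \<inter> M) \<in> \<Delta>"
        by (rule primitive_psubset_cone)
      moreover have "b \<in> rays \<Delta>"
        using that primitive_subset_rays by auto
      ultimately have "inner u b < 1"
        using u_less that by auto
      moreover have "inner u b \<in> \<int>"
        using lattice_basis_inner_Ints[OF maximal_cone_lattice_basis[OF fan complete M]
            lattice_vec_ray[OF fan \<open>b \<in> rays \<Delta>\<close>] u_Ints] .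
      ultimately show ?thesis
        by (intro Ints_less_one_imp_nonpos)
    qed
    then have "(\<Sum>p\<in>P - M. inner u p) \<le> 0"
      by (rule sum_nonpos)
    moreover have "inner u \<rho> = (\<Sum>p\<in>P \<inter> M. inner u p) + (\<Sum>p\<in>P - M. inner u p)"
      using relation finite_primitive by (auto simp: inner_sum_right sum.Int_Diff[symmetric])
    moreover have "inner u \<rho> = 1"
      using u1 \<rho> ray_not_in_primitive by auto
    ultimately show False
      using u0 by simp
  qed
  moreover have "P - M \<noteq> {}"
    using primitive_not_subset_cone[OF MD] by auto
  ultimately show ?thesis
    by blast
qed

lemma maximal_cone_exchange:
  assumes M: "maximal_cone \<Delta> M" and \<rho>: "\<rho> \<in> M" and q: "P - M = {q}"
    and p: "p \<in> P" "p \<noteq> q"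
  shows "insert q (M - {p}) \<in> \<Delta>"
proof -
  obtain M' where M': "maximal_cone \<Delta> M'" "M - {p} \<subseteq> M'" "p \<notin> M'"
    using maximal_cone_flip[OF fan complete M, of p] q p by auto
  have "\<rho> \<in> M'"
    using \<rho> M'(2) ray_not_in_primitive p(1) by auto
  then obtain q' where q': "P - M' = {q'}"
    using maximal_cone_misses_one_generator[OF M'(1)] by blast
  then have "q' = p"
    using p(1) M'(3) by (metis DiffI singletonD)
  moreover have "q \<in> P" "q \<noteq> p"
    using q p(2) by auto
  ultimately have "q \<in> M'"
    using q' by blast
  then show ?thesis
    using nonsingular_fan_face[OF fan maximal_cone_in[OF M'(1)]] M'(2) by blast
qed

lemma cone_Un_primitive_Diff_singleton:
  assumes S: "S \<in> \<Delta>" "\<rho> \<in> S" and p: "p \<in> P"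
  shows "(S \<union> P) - {p} \<in> \<Delta>"
proof -
  obtain M where M: "maximal_cone \<Delta> M" "S \<subseteq> M"
    using maximal_cone_exists[OF fan S(1)] by blast
  obtain q where q: "P - M = {q}"
    using maximal_cone_misses_one_generator[OF M(1)] S(2) M(2) by blast
  show ?thesis
  proof (cases "p = q")
    case True
    then have "(S \<union> P) - {p} \<subseteq> M"
      using q M(2) by blast
    then show ?thesis
      by (rule nonsingular_fan_face[OF fan maximal_cone_in[OF M(1)]])
  next
    case False
    then have "insert q (M - {p}) \<in> \<Delta>"
      using maximal_cone_exchange[OF M(1) _ q p] S(2) M(2) by blast
    moreover have "(S \<union> P) - {p} \<subseteq> insert q (M - {p})"
      using q M(2) by blast
    ultimately show ?thesis
      by (rule nonsingular_fan_face[OF fan])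
  qed
qed

definition blowdown_fan :: "(real^'n) set set" where
  "blowdown_fan = {S. \<rho> \<notin> S \<and> (S \<in> \<Delta> \<or> (P \<subseteq> S \<and> (\<forall>p\<in>P. insert \<rho> (S - {p}) \<in> \<Delta>)))}"

lemma ray_not_in_blowdown_fan_cone: "S \<in> blowdown_fan \<Longrightarrow> \<rho> \<notin> S"
  by (simp add: blowdown_fan_def)

lemma blowdown_fanD:
  assumes "S \<in> blowdown_fan" "S \<notin> \<Delta>"
  shows "P \<subseteq> S" "p \<in> P \<Longrightarrow> insert \<rho> (S - {p}) \<in> \<Delta>"
  using assms unfolding blowdown_fan_def by auto

lemma blowdown_fanI_cone: "S \<in> \<Delta> \<Longrightarrow> \<rho> \<notin> S \<Longrightarrow> S \<in> blowdown_fan"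
  by (simp add: blowdown_fan_def)

lemma blowdown_fanI_primitive:
  "\<rho> \<notin> S \<Longrightarrow> P \<subseteq> S \<Longrightarrow> (\<And>p. p \<in> P \<Longrightarrow> insert \<rho> (S - {p}) \<in> \<Delta>) \<Longrightarrow> S \<in> blowdown_fan"
  by (simp add: blowdown_fan_def)

lemma blowdown_fan_subset_Pow: "blowdown_fan \<subseteq> Pow (\<Union>\<Delta> \<union> P)"
proof
  fix S assume S: "S \<in> blowdown_fan"
  show "S \<in> Pow (\<Union>\<Delta> \<union> P)"
  proof (cases "S \<in> \<Delta>")
    case False
    obtain p where "p \<in> P"
      using primitive_nonempty by blast
    with blowdown_fanD(2)[OF S False] have "S - {p} \<subseteq> \<Union>\<Delta>"
      by blast
    with \<open>p \<in> P\<close> show ?thesis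
      by blast
  qed blast
qed

lemma finite_Union_fan_Un_primitive: "finite (\<Union>\<Delta> \<union> P)"
  using nonsingular_fan_finite[OF fan] nonsingular_fan_cone_finite[OF fan] finite_primitive by auto

lemma finite_blowdown_fan: "finite blowdown_fan"
  using blowdown_fan_subset_Pow finite_Union_fan_Un_primitive by (rule finite_subset[OF _ finite_Pow_iff[THEN iffD2]])

lemma blowdown_fan_cone_finite: "S \<in> blowdown_fan \<Longrightarrow> finite S"
  using blowdown_fan_subset_Pow finite_Union_fan_Un_primitive by (auto intro: finite_subset)

lemma blowdown_fan_cover:
  assumes S: "S \<in> blowdown_fan" and x: "x \<in> pos_hull S"
  shows "\<exists>C\<in>\<Delta>. x \<in> pos_hull C \<and> C \<subseteq> insert \<rho> S \<and> (\<rho> \<in> C \<longrightarrow> P \<subseteq> S)"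
proof (cases "S \<in> \<Delta>")
  case True
  then show ?thesis
    using x S unfolding blowdown_fan_def by auto
next
  case False
  note S' = blowdown_fanD[OF S False]
  obtain p where "p \<in> P" "x \<in> pos_hull (insert \<rho> (S - {p}))"
    using pos_hull_stellar_cover[OF blowdown_fan_cone_finite[OF S] S'(1)]
      ray_not_in_blowdown_fan_cone[OF S] relation primitive_nonempty x by auto
  then show ?thesis
    using S' by blast
qed

lemma blowdown_fan_inter:
  assumes S: "S \<in> blowdown_fan" and T: "T \<in> blowdown_fan"
  shows "pos_hull S \<inter> pos_hull T = pos_hull (S \<inter> T)"
proof
  have fin: "finite S" "finite T" "finite (S \<inter> T)"
    using blowdown_fan_cone_finite S T by auto
  show "pos_hull (S \<inter> T) \<subseteq> pos_hull S \<inter> pos_hull T"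
    using pos_hull_mono[OF fin(1), of "S \<inter> T"] pos_hull_mono[OF fin(2), of "S \<inter> T"] by auto
  show "pos_hull S \<inter> pos_hull T \<subseteq> pos_hull (S \<inter> T)"
  proof
    fix x assume x: "x \<in> pos_hull S \<inter> pos_hull T"
    obtain C where C: "C \<in> \<Delta>" "x \<in> pos_hull C" "C \<subseteq> insert \<rho> S" "\<rho> \<in> C \<longrightarrow> P \<subseteq> S"
      using blowdown_fan_cover[OF S] x by blast
    obtain D where D: "D \<in> \<Delta>" "x \<in> pos_hull D" "D \<subseteq> insert \<rho> T" "\<rho> \<in> D \<longrightarrow> P \<subseteq> T"
      using blowdown_fan_cover[OF T] x by blast
    have x_CD: "x \<in> pos_hull (C \<inter> D)"
      using nonsingular_fan_inter[OF fan C(1) D(1)] C(2) D(2) by auto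
    show "x \<in> pos_hull (S \<inter> T)"
    proof (cases "\<rho> \<in> C \<inter> D")
      case True
      then have "\<rho> \<in> pos_hull (S \<inter> T)"
        using C(4) D(4) sum_mem_pos_hull[OF fin(3), of P] relation by auto
      then have "pos_hull (insert \<rho> (S \<inter> T)) = pos_hull (S \<inter> T)"
        by (rule pos_hull_insert_redundant[OF fin(3)])
      moreover have "pos_hull (C \<inter> D) \<subseteq> pos_hull (insert \<rho> (S \<inter> T))"
        using C(3) D(3) fin(3) by (intro pos_hull_mono) auto
      ultimately show ?thesis
        using x_CD by auto
    next
      case False
      then have "C \<inter> D \<subseteq> S \<inter> T"
        using C(3) D(3) by auto
      then show ?thesis
        using x_CD pos_hull_mono[OF fin(3)] by auto
    qed
  qed
qed

lemma blowdown_fan_face: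
  assumes S: "S \<in> blowdown_fan" and TS: "T \<subseteq> S"
  shows "T \<in> blowdown_fan"
proof -
  have \<rho>: "\<rho> \<notin> T"
    using ray_not_in_blowdown_fan_cone[OF S] TS by blast
  show ?thesis
  proof (cases "S \<in> \<Delta>")
    case True
    show ?thesis
      using blowdown_fanI_cone[OF nonsingular_fan_face[OF fan True TS] \<rho>] .
  next
    case False
    note S' = blowdown_fanD[OF S False]
    show ?thesis
    proof (cases "P \<subseteq> T")
      case True
      show ?thesis
      proof (rule blowdown_fanI_primitive[OF \<rho> True])
        fix p assume "p \<in> P"
        have "insert \<rho> (T - {p}) \<subseteq> insert \<rho> (S - {p})"
          using TS by (intro insert_mono Diff_mono) auto
        then show "insert \<rho> (T - {p}) \<in> \<Delta>"
          by (rule nonsingular_fan_face[OF fan S'(2)[OF \<open>p \<in> P\<close>]])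
      qed
    next
      case False
      then obtain q where q: "q \<in> P" "q \<notin> T"
        by blast
      then have "T \<subseteq> insert \<rho> (S - {q})"
        using TS by blast
      then have "T \<in> \<Delta>"
        by (rule nonsingular_fan_face[OF fan S'(2)[OF q(1)]])
      then show ?thesis
        using blowdown_fanI_cone \<rho> by blast
    qed
  qed
qed

lemma blowdown_fan_basis:
  assumes S: "S \<in> blowdown_fan"
  shows "\<exists>B. lattice_basis B \<and> S \<subseteq> B"
proof (cases "S \<in> \<Delta>")
  case True
  then show ?thesis
    by (rule nonsingular_fan_basis[OF fan])
next
  case False
  note S' = blowdown_fanD[OF S False]
  obtain p where p: "p \<in> P"
    using primitive_nonempty by blast
  obtain M where M: "maximal_cone \<Delta> M" "insert \<rho> (S - {p}) \<subseteq> M"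
    using maximal_cone_exists[OF fan S'(2)[OF p]] by blast
  have "p \<notin> M"
    using S'(1) M(2) primitive_not_subset_cone[OF maximal_cone_in[OF M(1)]] by blast
  have Q: "P - {p} \<subseteq> M - {\<rho>}"
    using S'(1) M(2) ray_not_in_primitive by blast
  let ?k = "\<lambda>b. if b \<in> P - {p} then 1 else 0 :: real"
  have "\<rho> = p + \<Sum>(P - {p})"
    using relation finite_primitive p by (simp add: sum.remove)
  also have "\<Sum>(P - {p}) = (\<Sum>b\<in>M - {\<rho>}. ?k b *\<^sub>R b)"
    using sum_scaleR_extend[of "M - {\<rho>}" "P - {p}" "\<lambda>_. 1"] Q
      nonsingular_fan_cone_finite[OF fan maximal_cone_in[OF M(1)]] by simp
  finally have "lattice_basis (insert p (M - {\<rho>}))"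
    using lattice_basis_exchange[OF maximal_cone_lattice_basis[OF fan complete M(1)] _ \<open>p \<notin> M\<close>
        lattice_vec_ray[OF fan] , of \<rho> ?k] M(2) p primitive_subset_rays by auto
  moreover have "S \<subseteq> insert p (M - {\<rho>})"
    using M(2) ray_not_in_blowdown_fan_cone[OF S] by blast
  ultimately show ?thesis
    by blast
qed

lemma nonsingular_blowdown_fan: "nonsingular_fan blowdown_fan"
  unfolding nonsingular_fan_def
proof (intro conjI ballI allI impI)
  show "{} \<in> blowdown_fan"
    using nonsingular_fan_empty[OF fan] unfolding blowdown_fan_def by simp
  show "\<And>S T. S \<in> blowdown_fan \<Longrightarrow> T \<in> blowdown_fan \<Longrightarrow> pos_hull S \<inter> pos_hull T = pos_hull (S \<inter> T)"
    by (rule blowdown_fan_inter)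
qed (auto intro: finite_blowdown_fan blowdown_fan_face blowdown_fan_basis)

lemma primitive_in_blowdown_fan: "P \<in> blowdown_fan"
proof -
  have "insert \<rho> (P - {p}) = ({\<rho>} \<union> P) - {p}" if "p \<in> P" for p
    using that ray_not_in_primitive by auto
  moreover have "({\<rho>} \<union> P) - {p} \<in> \<Delta>" if "p \<in> P" for p
    using cone_Un_primitive_Diff_singleton[of "{\<rho>}" p] ray that unfolding rays_def by simp
  ultimately show ?thesis
    using ray_not_in_primitive unfolding blowdown_fan_def by auto
qed

lemma star_subdivision_blowdown_fan: "\<Delta> = star_subdivision blowdown_fan P"
proof
  show "\<Delta> \<subseteq> star_subdivision blowdown_fan P"
  proof
    fix S assume S: "S \<in> \<Delta>"
    show "S \<in> star_subdivision blowdown_fan P"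
    proof (cases "\<rho> \<in> S")
      case False
      then have "S \<in> blowdown_fan"
        using S unfolding blowdown_fan_def by simp
      then show ?thesis
        using primitive_not_subset_cone[OF S] unfolding star_subdivision_def by blast
    next
      case True
      define \<tau> where "\<tau> = S - {\<rho>}"
      have "\<tau> \<in> \<Delta>"
        using nonsingular_fan_face[OF fan S] unfolding \<tau>_def by blast
      then have \<tau>: "\<tau> \<in> blowdown_fan" "\<not> P \<subseteq> \<tau>"
        using primitive_not_subset_cone unfolding blowdown_fan_def \<tau>_def by auto
      have "insert \<rho> ((\<tau> \<union> P) - {p}) = (S \<union> P) - {p}" if "p \<in> P" for p
        using True that ray_not_in_primitive unfolding \<tau>_def by auto
      then have "\<tau> \<union> P \<in> blowdown_fan"
        using cone_Un_primitive_Diff_singleton[OF S True] ray_not_in_primitive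
        unfolding blowdown_fan_def \<tau>_def by auto
      moreover have "S = insert (\<Sum>P) \<tau>"
        using True relation unfolding \<tau>_def by auto
      ultimately show ?thesis
        using \<tau> unfolding star_subdivision_def by blast
    qed
  qed
  show "star_subdivision blowdown_fan P \<subseteq> \<Delta>"
  proof
    fix S assume "S \<in> star_subdivision blowdown_fan P"
    then consider (old) "S \<in> blowdown_fan" "\<not> P \<subseteq> S"
      | (new) \<tau> where "S = insert (\<Sum>P) \<tau>" "\<not> P \<subseteq> \<tau>" "\<tau> \<union> P \<in> blowdown_fan"
      unfolding star_subdivision_def by blast
    then show "S \<in> \<Delta>"
    proof cases
      case old
      then show ?thesis
        unfolding blowdown_fan_def by blast
    next
      case new
      obtain q where q: "q \<in> P" "q \<notin> \<tau>"
        using new(2) by blast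
      have "insert \<rho> ((\<tau> \<union> P) - {q}) \<in> \<Delta>"
        using blowdown_fanD(2)[OF new(3) _ q(1)] primitive_not_subset_cone by blast
      moreover have "S \<subseteq> insert \<rho> ((\<tau> \<union> P) - {q})"
        using new(1) q(2) relation by blast
      ultimately show ?thesis
        using nonsingular_fan_face[OF fan] by blast
    qed
  qed
qed

end

theorem proposition3p5:
  fixes \<Delta> :: "(real^'n) set set" and P :: "(real^'n) set" and rho_hat :: "real^'n"
  assumes "nonsingular_fan \<Delta>" and "complete_fan \<Delta>"
    and "fano \<Delta>" and "all_toric_subvarieties_fano \<Delta>"
    and "primitive_collection \<Delta> P"
    and "rho_hat \<in> rays \<Delta>" and "\<Sum>P = rho_hat"
  shows "\<exists>\<Delta>'. nonsingular_fan \<Delta>' \<and> P \<in> \<Delta>' \<and> \<Delta> = star_subdivision \<Delta>' P"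
proof -
  \<comment> \<open>fano \<Delta> is the case \<tau> = {} of all_toric_subvarieties_fano \<Delta> and is not needed.\<close>
  interpret exceptional_primitive_relation \<Delta> P rho_hat
    using assms by unfold_locales
  show ?thesis
    using nonsingular_blowdown_fan primitive_in_blowdown_fan star_subdivision_blowdown_fan by blast
qed

end
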